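(* For every $n\ge2$, $$\mathrm{Var}\big(\tau^{(n)}\big)=\frac{n+1}{n-1}H_{n,2}-\frac{2(n+1)}{(n-1)^2}H_{n,1}^2+\frac{4(n+1)}{(n-1)^2}H_{n,1}-\frac{4}{n-1}-\frac{4}{(n-1)^2},$$ which tends to $\pi^2/6$ as $n\to\infty$.
   Context: Fix $n\ge 2$. A Yule tree with speciation rate 1 on $n$ tips: start with a single lineage; each lineage independently splits into two at rate 1; the process is stopped just before the $n$-th speciation event, so the tree has $n$ tips and $n-1$ speciation (internal) nodes, numbered $1,\dots,n-1$ chronologically from the root. For $i=1,\dots,n$ let $T_i$ be the length of the time interval during which there are exactly $i$ lineages; the $T_i$ are independent, $T_i\sim\mathrm{Exp}(i)$ (rate $i$), the $k$-th speciation occurs at time $T_1+\dots+T_k$, and at each speciation the splitting lineage is uniformly chosen among current lineages, independently of the $T_i$. Choose an unordered pair of distinct tips uniformly at random and let $\kappa_n\in\{1,\dots,n-1\}$ be the index of the speciation event at which their lineages split; the coalescent time of the pair is $\tau^{(n)}=T_{\kappa_n+1}+\dots+T_n$. $H_{n,r}=\sum_{i=1}^n i^{-r}$. *)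

theory Defs
  imports "HOL-Probability.Probability"
begin

text \<open>A lineage is recorded by its path from the root: the list of
  (speciation index, side) pairs of the speciation events it passed through.\<close>
type_synonym lineage = "(nat \<times> bool) list"

text \<open>Speciation: lineage i of the current list L splits at the event with
  index length L (the k-th speciation happens when there are k lineages).\<close>
definition split_lineage :: "lineage list \<Rightarrow> nat \<Rightarrow> lineage list" where
  "split_lineage L i =
     take i L @ [L ! i @ [(length L, False)], L ! i @ [(length L, True)]] @ drop (Suc i) L"

text \<open>Tips of the Yule tree (topology only) after growing to m lineages;
  the splitting lineage is uniform among current lineages.\<close>
fun yule_tips :: "nat \<Rightarrow> lineage list pmf" where
  "yule_tips 0 = return_pmf [[]]"
| "yule_tips (Suc 0) = return_pmf [[]]"
| "yule_tips (Suc (Suc m)) =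
     bind_pmf (yule_tips (Suc m))
       (\<lambda>L. map_pmf (split_lineage L) (pmf_of_set {..<length L}))"

fun split_idx :: "lineage \<Rightarrow> lineage \<Rightarrow> nat" where
  "split_idx (x # xs) (y # ys) = (if x = y then split_idx xs ys else fst x)"
| "split_idx _ _ = 0"

definition kappa_pmf :: "nat \<Rightarrow> nat pmf" where
  "kappa_pmf n = bind_pmf (yule_tips n)
     (\<lambda>L. map_pmf (\<lambda>(a, b). split_idx (L ! a) (L ! b))
            (pmf_of_set {(a, b). a < b \<and> b < n}))"

definition yule_space :: "nat \<Rightarrow> (nat \<times> (nat \<Rightarrow> real)) measure" where
  "yule_space n = measure_pmf (kappa_pmf n) \<Otimes>\<^sub>M
     (\<Pi>\<^sub>M i\<in>{1..n}. density lborel (exponential_density (real i)))"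

definition coal_time :: "nat \<Rightarrow> nat \<times> (nat \<Rightarrow> real) \<Rightarrow> real" where
  "coal_time n \<omega> = (\<Sum>i\<in>{Suc (fst \<omega>)..n}. snd \<omega> i)"

definition H :: "nat \<Rightarrow> nat \<Rightarrow> real" where
  "H n r = (\<Sum>i=1..n. 1 / real i ^ r)"

end

theory Submission
  imports Defs "HOL-Real_Asymp.Real_Asymp"
begin

text \<open>
  Count ordered pairs of distinct tips by the speciation event at which their lineages split.
  Splitting a uniformly chosen tip w of a tree with m tips doubles every pair containing w
  and adds the two sibling pairs split at event m; averaging over w gives the recursion
  c(k, m + 1) = c(k, m) (m + 2) / m + 2 [k = m] for the expected count, whence
  P(kappa_n = k) = 2 (n + 1) / ((n - 1) (k + 1) (k + 2)) for 1 \<le> k < n.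
  Given kappa_n = k, the coalescent time is a sum of the independent exponentials
  T_(k+1), ..., T_n, with mean H_n - H_k and second moment (H_n - H_k)^2 + H_(n,2) - H_(k,2).
  Against the weights 1 / ((k + 1) (k + 2)) the sums of 1, H_k, H_(k,2) and H_k^2 telescope,
  so E tau = ((n + 1) H_n - 2 n) / (n - 1) and
  E tau^2 = ((n + 1) (H_n^2 + H_(n,2) - 4 H_n) + 4 n) / (n - 1).
  The limit follows from H_(n,2) \<longrightarrow> pi^2 / 6 and H_n \<le> 1 + ln n.
\<close>

section \<open>Lineages of the Yule tree\<close>

lemma split_idx_append_Cons:
  assumes "b \<noteq> c"
  shows "split_idx (p @ (j, b) # xs) (p @ (j, c) # ys) = j"
  using assms by (induction p) auto

definition diverging :: "lineage \<Rightarrow> lineage \<Rightarrow> bool" where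
  "diverging u v \<longleftrightarrow> (\<exists>p j b xs ys. u = p @ (j, b) # xs \<and> v = p @ (j, \<not> b) # ys)"

lemma diverging_sym:
  assumes "diverging u v"
  shows "diverging v u"
proof -
  obtain p j b xs ys where "u = p @ (j, b) # xs" "v = p @ (j, \<not> b) # ys"
    using assms unfolding diverging_def by blast
  then show ?thesis
    unfolding diverging_def by (intro exI[of _ p] exI[of _ j] exI[of _ "\<not> b"] exI[of _ ys] exI[of _ xs]) auto
qed

lemma diverging_appendI: "diverging u v \<Longrightarrow> diverging (u @ s) v"
  unfolding diverging_def by (metis append.assoc append_Cons)

lemma diverging_children: "diverging (w @ [(j, False)]) (w @ [(j, True)])"
  unfolding diverging_def by (intro exI[of _ w] exI[of _ j] exI[of _ False] exI[of _ "[]"]) auto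

lemma diverging_not_prefix: "diverging u v \<Longrightarrow> v \<noteq> u @ s"
  unfolding diverging_def by auto

lemma split_idx_diverging_sym: "diverging u v \<Longrightarrow> split_idx u v = split_idx v u"
  unfolding diverging_def
  by (metis split_idx_append_Cons)

lemma split_idx_diverging_append:
  assumes "diverging u v"
  shows "split_idx (u @ s) v = split_idx u v" "split_idx v (u @ s) = split_idx u v"
proof -
  show *: "split_idx (u @ s) v = split_idx u v"
    using assms unfolding diverging_def by (auto simp: split_idx_append_Cons)
  show "split_idx v (u @ s) = split_idx u v"
    using * split_idx_diverging_sym[OF diverging_sym[OF diverging_appendI[OF assms]]] by simp
qed

definition tree_tips :: "lineage list \<Rightarrow> bool" where
  "tree_tips L \<longleftrightarrow> distinct L \<and> (\<forall>u\<in>set L. \<forall>v\<in>set L. u \<noteq> v \<longrightarrow> diverging u v)"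

lemma set_split_lineage:
  assumes "i < length L" "distinct L"
  shows "set (split_lineage L i) =
    insert (L ! i @ [(length L, False)]) (insert (L ! i @ [(length L, True)]) (set L - {L ! i}))"
proof -
  have L: "L = take i L @ L ! i # drop (Suc i) L"
    using assms by (simp add: id_take_nth_drop)
  then have "distinct (take i L @ L ! i # drop (Suc i) L)"
    using assms by simp
  moreover have "set L = insert (L ! i) (set (take i L) \<union> set (drop (Suc i) L))"
    by (subst L) auto
  ultimately show ?thesis
    unfolding split_lineage_def by auto
qed

lemma length_split_lineage: "i < length L \<Longrightarrow> length (split_lineage L i) = Suc (length L)"
  by (simp add: split_lineage_def)

lemma tree_tips_split_lineage:
  assumes L: "tree_tips L" and i: "i < length L"
  shows "tree_tips (split_lineage L i)"
proof -
  let ?w = "L ! i"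
  have dist: "distinct L" and div: "\<And>u v. u \<in> set L \<Longrightarrow> v \<in> set L \<Longrightarrow> u \<noteq> v \<Longrightarrow> diverging u v"
    using L unfolding tree_tips_def by auto
  have w: "?w \<in> set L"
    using i by simp
  have fresh: "?w @ s \<notin> set L - {?w}" for s
    using div[OF w] diverging_not_prefix by blast
  have div_w: "diverging (?w @ s) v" "diverging v (?w @ s)" if "v \<in> set L - {?w}" for v s
    using that div[OF w] diverging_appendI diverging_sym by auto
  have "distinct (split_lineage L i)"
  proof -
    have "distinct (take i L @ ?w # drop (Suc i) L)"
      using dist i by (simp add: id_take_nth_drop[symmetric])
    moreover have "set (take i L) \<union> set (drop (Suc i) L) \<subseteq> set L - {?w}"
      using calculation by (auto dest: in_set_takeD in_set_dropD)
    ultimately show ?thesis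
      unfolding split_lineage_def using fresh by auto
  qed
  then show ?thesis
    unfolding tree_tips_def set_split_lineage[OF i dist]
    using div div_w diverging_children diverging_sym by auto
qed

lemma tree_tips_yule_tips:
  "L \<in> set_pmf (yule_tips m) \<Longrightarrow> tree_tips L \<and> length L = max 1 m"
proof (induction m arbitrary: L rule: yule_tips.induct)
  case (3 m)
  then obtain L0 i where "L0 \<in> set_pmf (yule_tips (Suc m))" "i < length L0" "L = split_lineage L0 i"
    by (auto simp: lessThan_empty_iff)
  with "3.IH" show ?case
    by (auto simp: tree_tips_split_lineage length_split_lineage)
qed (auto simp: tree_tips_def)

lemma finite_set_pmf_yule_tips: "finite (set_pmf (yule_tips m))"
proof (induction m rule: yule_tips.induct)
  case (3 m)
  have "set_pmf (pmf_of_set {..<length L}) = {..<Suc m}" if "L \<in> set_pmf (yule_tips (Suc m))" for L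
    using tree_tips_yule_tips[OF that] by (simp add: lessThan_empty_iff)
  with "3.IH" show ?case
    by simp
qed auto

section \<open>Distribution of the split index\<close>

lemma double_sum_replace_by_twins:
  fixes F :: "'a \<Rightarrow> 'a \<Rightarrow> 'b::comm_semiring_1"
  assumes "finite S" "w \<notin> S" "c0 \<notin> S" "c1 \<notin> S" "c0 \<noteq> c1"
    and diag: "\<And>x. F x x = 0"
    and twins: "\<And>v. v \<in> S \<Longrightarrow>
      F c0 v = F w v \<and> F c1 v = F w v \<and> F v c0 = F w v \<and> F v c1 = F w v \<and> F v w = F w v"
  shows "(\<Sum>u\<in>insert c0 (insert c1 S). \<Sum>v\<in>insert c0 (insert c1 S). F u v)
       = (\<Sum>u\<in>insert w S. \<Sum>v\<in>insert w S. F u v) + 2 * (\<Sum>v\<in>S. F w v) + F c0 c1 + F c1 c0"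
proof -
  have "(\<Sum>v\<in>S. F c0 v) = (\<Sum>v\<in>S. F w v)" "(\<Sum>v\<in>S. F c1 v) = (\<Sum>v\<in>S. F w v)"
    "(\<Sum>u\<in>S. F u c0) = (\<Sum>v\<in>S. F w v)" "(\<Sum>u\<in>S. F u c1) = (\<Sum>v\<in>S. F w v)"
    "(\<Sum>u\<in>S. F u w) = (\<Sum>v\<in>S. F w v)"
    using twins by (auto intro!: sum.cong)
  with assms show ?thesis
    by (simp add: sum.distrib diag algebra_simps mult_2)
qed

definition split_count :: "nat \<Rightarrow> lineage set \<Rightarrow> real" where
  "split_count k S = (\<Sum>u\<in>S. \<Sum>v\<in>S. of_bool (u \<noteq> v \<and> split_idx u v = k))"

definition split_degree :: "nat \<Rightarrow> lineage set \<Rightarrow> lineage \<Rightarrow> real" where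
  "split_degree k S w = (\<Sum>v\<in>S. of_bool (w \<noteq> v \<and> split_idx w v = k))"

lemma sum_split_degree: "(\<Sum>w\<in>S. split_degree k S w) = split_count k S"
  unfolding split_degree_def split_count_def ..

lemma split_count_split_lineage:
  assumes L: "tree_tips L" and i: "i < length L"
  shows "split_count k (set (split_lineage L i)) =
    split_count k (set L) + 2 * split_degree k (set L) (L ! i) + 2 * of_bool (k = length L)"
proof -
  let ?w = "L ! i" and ?S = "set L - {L ! i}"
  let ?c0 = "?w @ [(length L, False)]" and ?c1 = "?w @ [(length L, True)]"
  let ?F = "\<lambda>u v. of_bool (u \<noteq> v \<and> split_idx u v = k) :: real"
  have dist: "distinct L" and div: "\<And>u v. u \<in> set L \<Longrightarrow> v \<in> set L \<Longrightarrow> u \<noteq> v \<Longrightarrow> diverging u v"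
    using L unfolding tree_tips_def by auto
  have w: "?w \<in> set L"
    using i by simp
  have div_w: "diverging ?w v" if "v \<in> ?S" for v
    using that div[OF w] by auto
  have fresh: "?w @ s \<notin> ?S" for s
    using div_w diverging_not_prefix by blast
  have twins: "?F ?c0 v = ?F ?w v \<and> ?F ?c1 v = ?F ?w v \<and> ?F v ?c0 = ?F ?w v \<and> ?F v ?c1 = ?F ?w v
      \<and> ?F v ?w = ?F ?w v" if v: "v \<in> ?S" for v
    using v fresh[of "[(length L, False)]"] fresh[of "[(length L, True)]"] div_w[OF v]
    by (auto simp: split_idx_diverging_append split_idx_diverging_sym diverging_appendI)
  have children: "?F ?c0 ?c1 = of_bool (k = length L)" "?F ?c1 ?c0 = of_bool (k = length L)"
    using split_idx_append_Cons[of False True ?w "length L" "[]" "[]"]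
      split_idx_append_Cons[of True False ?w "length L" "[]" "[]"] by auto
  have "split_count k (set (split_lineage L i))
      = (\<Sum>u\<in>insert ?w ?S. \<Sum>v\<in>insert ?w ?S. ?F u v) + 2 * (\<Sum>v\<in>?S. ?F ?w v) + ?F ?c0 ?c1 + ?F ?c1 ?c0"
    unfolding split_count_def set_split_lineage[OF i dist]
    by (rule double_sum_replace_by_twins) (use fresh twins in auto)
  moreover have "insert ?w ?S = set L"
    using w by auto
  moreover have "(\<Sum>v\<in>?S. ?F ?w v) = split_degree k (set L) ?w"
    unfolding split_degree_def using sum.remove[OF finite_set w, of "?F ?w"] by simp
  ultimately show ?thesis
    using children unfolding split_count_def by simp
qed

lemma expectation_bind_pmf_finite:
  fixes f :: "'b \<Rightarrow> real"
  assumes "finite (set_pmf p)" "\<And>x. x \<in> set_pmf p \<Longrightarrow> finite (set_pmf (q x))"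
  shows "measure_pmf.expectation (bind_pmf p q) f =
    measure_pmf.expectation p (\<lambda>x. measure_pmf.expectation (q x) f)"
  using assms by (simp add: pmf_expectation_bind[OF assms(1) _ order_refl]
      integral_measure_pmf_real[OF assms(1)] mult.commute)

definition expected_split_count :: "nat \<Rightarrow> nat \<Rightarrow> real" where
  "expected_split_count k m = measure_pmf.expectation (yule_tips m) (\<lambda>L. split_count k (set L))"

lemma expectation_split_count_split_lineage:
  assumes L: "tree_tips L" "length L = m" and m: "m \<ge> 1"
  shows "measure_pmf.expectation (map_pmf (split_lineage L) (pmf_of_set {..<m}))
      (\<lambda>L. split_count k (set L)) = split_count k (set L) * (real m + 2) / real m + 2 * of_bool (k = m)"
proof -
  have "measure_pmf.expectation (map_pmf (split_lineage L) (pmf_of_set {..<m})) (\<lambda>L. split_count k (set L))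
      = (\<Sum>i<m. split_count k (set (split_lineage L i))) / real m"
    unfolding integral_map_pmf using m by (subst integral_pmf_of_set) (auto simp: lessThan_empty_iff)
  also have "(\<Sum>i<m. split_count k (set (split_lineage L i)))
      = real m * split_count k (set L) + 2 * (\<Sum>i<m. split_degree k (set L) (L ! i))
        + 2 * real m * of_bool (k = m)"
    using L by (simp add: split_count_split_lineage sum.distrib sum_distrib_left)
  also have "(\<Sum>i<m. split_degree k (set L) (L ! i)) = split_count k (set L)"
    using L by (simp add: sum_split_degree[symmetric] sum.distinct_set_conv_list sum_list_sum_nth
        tree_tips_def atLeast0LessThan)
  finally show ?thesis
    using m by (simp add: field_simps)
qed

lemma expected_split_count_Suc:
  assumes m: "m \<ge> 1"
  shows "expected_split_count k (Suc m) =
    expected_split_count k m * (real m + 2) / real m + 2 * of_bool (k = m)"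
proof -
  obtain m' where m': "m = Suc m'"
    using m by (cases m) auto
  have "expected_split_count k (Suc m) = measure_pmf.expectation (yule_tips m) (\<lambda>L.
      measure_pmf.expectation (map_pmf (split_lineage L) (pmf_of_set {..<length L}))
        (\<lambda>L. split_count k (set L)))"
    unfolding expected_split_count_def m' yule_tips.simps(3)
  proof (rule expectation_bind_pmf_finite)
    fix L assume "L \<in> set_pmf (yule_tips (Suc m'))"
    then have "set_pmf (map_pmf (split_lineage L) (pmf_of_set {..<length L})) \<subseteq>
        set_pmf (yule_tips (Suc (Suc m')))"
      by auto
    then show "finite (set_pmf (map_pmf (split_lineage L) (pmf_of_set {..<length L})))"
      using finite_set_pmf_yule_tips finite_subset by blast
  qed (rule finite_set_pmf_yule_tips)
  also have "\<dots> = measure_pmf.expectation (yule_tips m)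
      (\<lambda>L. split_count k (set L) * (real m + 2) / real m + 2 * of_bool (k = m))"
    using tree_tips_yule_tips[of _ m] m
    by (intro integral_cong_AE) (auto simp: AE_measure_pmf_iff expectation_split_count_split_lineage
        simp del: integral_map_pmf)
  also have "\<dots> = expected_split_count k m * (real m + 2) / real m + 2 * of_bool (k = m)"
    unfolding expected_split_count_def
    by (simp add: integrable_measure_pmf_finite finite_set_pmf_yule_tips)
  finally show ?thesis .
qed

lemma expected_split_count_eq:
  assumes "m \<ge> 1"
  shows "expected_split_count k m =
    (if 1 \<le> k \<and> k < m then 2 * real m * (real m + 1) / ((real k + 1) * (real k + 2)) else 0)"
  using assms
proof (induction m rule: dec_induct)
  case base
  show ?case
    by (simp add: expected_split_count_def split_count_def)
next
  case (step j)
  have j: "real j > 0"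
    using step by simp
  consider "1 \<le> k \<and> k < j" | "k = j" | "k = 0 \<or> k > j"
    by linarith
  then show ?case
  proof cases
    case 1
    have "2 * x * y / D * z / x = 2 * y * z / D" if "x > 0" for x y z D :: real
      using that by simp
    with 1 step j show ?thesis
      by (simp add: expected_split_count_Suc) (simp add: algebra_simps)
  next
    case 2
    have "2 * real (Suc j) * (real (Suc j) + 1) = 2 * ((real j + 1) * (real j + 2))"
      by (simp add: algebra_simps)
    moreover have "(real j + 1) * (real j + 2) > 0"
      by (intro mult_pos_pos) auto
    ultimately show ?thesis
      using 2 step by (simp add: expected_split_count_Suc)
  next
    case 3
    then show ?thesis
      using step by (auto simp: expected_split_count_Suc)
  qed
qed

lemma card_ordered_pairs_symmetric:
  fixes n :: nat
  assumes "\<And>a b. a < n \<Longrightarrow> b < n \<Longrightarrow> a \<noteq> b \<Longrightarrow> P a b \<Longrightarrow> P b a"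
  shows "card {(a, b). a < n \<and> b < n \<and> a \<noteq> b \<and> P a b} = 2 * card {(a, b). a < b \<and> b < n \<and> P a b}"
proof -
  let ?U = "{(a, b). a < b \<and> b < n \<and> P a b}"
  have fin: "finite ?U"
    by (rule finite_subset[of _ "{..<n} \<times> {..<n}"]) auto
  have "{(a, b). a < n \<and> b < n \<and> a \<noteq> b \<and> P a b} = ?U \<union> prod.swap ` ?U"
  proof (intro equalityI subsetI)
    fix x assume "x \<in> {(a, b). a < n \<and> b < n \<and> a \<noteq> b \<and> P a b}"
    then obtain a b where "x = (a, b)" "a < n" "b < n" "a \<noteq> b" "P a b"
      by blast
    then show "x \<in> ?U \<union> prod.swap ` ?U"
      using assms[of a b] by (cases "a < b") (auto simp: image_iff)
  qed (use assms in auto)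
  moreover have "?U \<inter> prod.swap ` ?U = {}"
    by auto
  ultimately show ?thesis
    using fin by (simp add: card_Un_disjoint card_image)
qed

lemma card_ordered_distinct_pairs: "card {(a, b). a < n \<and> b < n \<and> a \<noteq> (b::nat)} = n * (n - 1)"
proof -
  have "{(a, b). a < n \<and> b < n \<and> a \<noteq> b} = (SIGMA a:{..<n}. {..<n} - {a})"
    by auto
  then show ?thesis
    by simp
qed

lemma split_count_eq_card:
  assumes L: "tree_tips L" "length L = n"
  shows "split_count k (set L) = card {(a, b). a < n \<and> b < n \<and> a \<noteq> b \<and> split_idx (L ! a) (L ! b) = k}"
proof -
  have dist: "distinct L"
    using L unfolding tree_tips_def by simp
  have "split_count k (set L) = (\<Sum>a<n. \<Sum>b<n. of_bool (L ! a \<noteq> L ! b \<and> split_idx (L ! a) (L ! b) = k))"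
    unfolding split_count_def using L dist
    by (simp add: sum.distinct_set_conv_list sum_list_sum_nth atLeast0LessThan del: sum_of_bool_eq)
  also have "\<dots> = (\<Sum>x\<in>{..<n} \<times> {..<n}. of_bool (case x of (a, b) \<Rightarrow> a \<noteq> b \<and> split_idx (L ! a) (L ! b) = k))"
    using L dist by (simp add: sum.cartesian_product split_def nth_eq_iff_index_eq del: sum_of_bool_eq)
  also have "\<dots> = card ({..<n} \<times> {..<n} \<inter> {x. case x of (a, b) \<Rightarrow> a \<noteq> b \<and> split_idx (L ! a) (L ! b) = k})"
    by (intro sum_of_bool_eq finite_cartesian_product finite_lessThan)
  also have "{..<n} \<times> {..<n} \<inter> {x. case x of (a, b) \<Rightarrow> a \<noteq> b \<and> split_idx (L ! a) (L ! b) = k} =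
      {(a, b). a < n \<and> b < n \<and> a \<noteq> b \<and> split_idx (L ! a) (L ! b) = k}"
    by auto
  finally show ?thesis .
qed

lemma card_index_pairs: "2 * real (card {(a, b). a < b \<and> b < n}) = real n * (real n - 1)"
proof -
  have "2 * card {(a, b). a < b \<and> b < n} = n * (n - 1)"
    using card_ordered_pairs_symmetric[of n "\<lambda>_ _. True"] card_ordered_distinct_pairs[of n] by simp
  then have "real (2 * card {(a, b). a < b \<and> b < n}) = real (n * (n - 1))"
    by (simp only:)
  then show ?thesis
    by (cases n) (auto simp: algebra_simps)
qed

lemma pmf_split_idx_random_pair:
  assumes L: "tree_tips L" "length L = n" and n: "n \<ge> 2"
  shows "pmf (map_pmf (\<lambda>(a, b). split_idx (L ! a) (L ! b)) (pmf_of_set {(a, b). a < b \<and> b < n})) k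
    = split_count k (set L) / (real n * (real n - 1))"
proof -
  let ?U = "{(a, b). a < b \<and> b < n}" and ?s = "\<lambda>(a, b). split_idx (L ! a) (L ! b)"
  have fin: "finite ?U"
    by (rule finite_subset[of _ "{..<n} \<times> {..<n}"]) auto
  have "(0, 1) \<in> ?U"
    using n by simp
  then have "?U \<noteq> {}"
    by blast
  then have "pmf (map_pmf ?s (pmf_of_set ?U)) k = 2 * real (card (?U \<inter> ?s -` {k})) / (2 * real (card ?U))"
    using fin by (simp add: pmf_map measure_pmf_of_set)
  moreover have "?U \<inter> ?s -` {k} = {(a, b). a < b \<and> b < n \<and> split_idx (L ! a) (L ! b) = k}"
    by auto
  moreover have "split_idx (L ! b) (L ! a) = k"
    if "a < n" "b < n" "a \<noteq> b" "split_idx (L ! a) (L ! b) = k" for a b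
  proof -
    have "L ! a \<noteq> L ! b" "L ! a \<in> set L" "L ! b \<in> set L"
      using that L by (auto simp: tree_tips_def nth_eq_iff_index_eq)
    then show ?thesis
      using that L split_idx_diverging_sym unfolding tree_tips_def by metis
  qed
  ultimately show ?thesis
    using card_ordered_pairs_symmetric[of n "\<lambda>a b. split_idx (L ! a) (L ! b) = k"]
    by (simp add: split_count_eq_card[OF L] card_index_pairs)
qed

lemma pmf_kappa:
  assumes n: "n \<ge> 2"
  shows "pmf (kappa_pmf n) k =
    (if 1 \<le> k \<and> k < n then 2 * (real n + 1) / ((real n - 1) * (real k + 1) * (real k + 2)) else 0)"
proof -
  have "pmf (kappa_pmf n) k =
      measure_pmf.expectation (yule_tips n) (\<lambda>L. split_count k (set L) / (real n * (real n - 1)))"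
    unfolding kappa_pmf_def pmf_bind using tree_tips_yule_tips[of _ n] n
    by (intro integral_cong_AE) (auto simp: AE_measure_pmf_iff pmf_split_idx_random_pair)
  also have "\<dots> = expected_split_count k n / (real n * (real n - 1))"
    unfolding expected_split_count_def by (rule integral_divide_zero)
  finally show ?thesis
    using n by (auto simp: expected_split_count_eq)
qed

section \<open>Exponential waiting times\<close>

lemma (in product_sigma_finite) integral_prod_coordinates:
  fixes f :: "'i \<Rightarrow> 'a \<Rightarrow> real"
  assumes "finite I" "J \<subseteq> I" "\<And>i. i \<in> I \<Longrightarrow> prob_space (M i)"
    and int: "\<And>i. i \<in> J \<Longrightarrow> integrable (M i) (f i)"
  shows "integrable (Pi\<^sub>M I M) (\<lambda>x. \<Prod>i\<in>J. f i (x i))"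
    and "(\<integral>x. (\<Prod>i\<in>J. f i (x i)) \<partial>Pi\<^sub>M I M) = (\<Prod>i\<in>J. integral\<^sup>L (M i) (f i))"
proof -
  define g where "g i x = (if i \<in> J then f i x else 1)" for i x
  have g_int: "integrable (M i) (g i)" if "i \<in> I" for i
    using int finite_measure.integrable_const[OF prob_space.finite_measure[OF assms(3)[OF that]]]
    unfolding g_def by (cases "i \<in> J") auto
  have g_integral: "integral\<^sup>L (M i) (g i) = (if i \<in> J then integral\<^sup>L (M i) (f i) else 1)"
    if "i \<in> I" for i
    using prob_space.prob_space[OF assms(3)[OF that]] unfolding g_def by simp
  have prod_g: "(\<Prod>i\<in>I. g i (x i)) = (\<Prod>i\<in>J. f i (x i))" for x
    using assms(1,2) by (subst prod.mono_neutral_right[of I J]) (auto simp: g_def)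
  show "integrable (Pi\<^sub>M I M) (\<lambda>x. \<Prod>i\<in>J. f i (x i))"
    using product_integrable_prod[OF assms(1) g_int] by (simp add: prod_g)
  have "(\<integral>x. (\<Prod>i\<in>J. f i (x i)) \<partial>Pi\<^sub>M I M) = (\<integral>x. (\<Prod>i\<in>I. g i (x i)) \<partial>Pi\<^sub>M I M)"
    by (simp add: prod_g)
  also have "\<dots> = (\<Prod>i\<in>I. integral\<^sup>L (M i) (g i))"
    using product_integral_prod[OF assms(1) g_int] by simp
  also have "\<dots> = (\<Prod>i\<in>J. integral\<^sup>L (M i) (f i))"
    using assms(1,2) by (subst prod.mono_neutral_right[of I J]) (auto simp: g_integral intro!: prod.cong)
  finally show "(\<integral>x. (\<Prod>i\<in>J. f i (x i)) \<partial>Pi\<^sub>M I M) = (\<Prod>i\<in>J. integral\<^sup>L (M i) (f i))" .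
qed

abbreviation Exp_law :: "nat \<Rightarrow> real measure" where
  "Exp_law i \<equiv> density lborel (exponential_density (real i))"

lemma prob_space_Exp_law: "i > 0 \<Longrightarrow> prob_space (Exp_law i)"
  by (rule prob_space_exponential_density) simp

lemma has_bochner_integral_Exp_law_power:
  assumes "i > 0"
  shows "has_bochner_integral (Exp_law i) (\<lambda>x. x ^ k) (fact k / real i ^ k)"
proof -
  interpret prob_space "Exp_law i"
    using prob_space_Exp_law[OF assms] .
  have "distributed (Exp_law i) lborel (\<lambda>x. x) (exponential_density (real i))"
    by (simp add: distributed_def distr_id2)
  from has_bochner_integral_erlang_ith_moment[OF _ this, of k] assms show ?thesis
    by simp
qed

interpretation Exp_laws: product_sigma_finite Exp_law
  unfolding product_sigma_finite_def
  by (auto simp: sigma_finite_measure.sigma_finite_iff_density_finite[OF sigma_finite_lborel])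

definition waiting_times :: "nat \<Rightarrow> (nat \<Rightarrow> real) measure" where
  "waiting_times n = (\<Pi>\<^sub>M i\<in>{1..n}. Exp_law i)"

lemma prob_space_waiting_times: "prob_space (waiting_times n)"
  unfolding waiting_times_def by (rule prob_space_PiM) (auto intro: prob_space_Exp_law)

lemma has_bochner_integral_waiting_times_prod:
  fixes f :: "nat \<Rightarrow> real \<Rightarrow> real"
  assumes "J \<subseteq> {1..n}" "\<And>l. l \<in> J \<Longrightarrow> has_bochner_integral (Exp_law l) (f l) (c l)"
  shows "has_bochner_integral (waiting_times n) (\<lambda>T. \<Prod>l\<in>J. f l (T l)) (\<Prod>l\<in>J. c l)"
  using assms Exp_laws.integral_prod_coordinates[of "{1..n}" J f] unfolding waiting_times_def
  by (auto simp: prob_space_Exp_law has_bochner_integral_iff)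

lemma has_bochner_integral_waiting_time:
  assumes "i \<in> {1..n}"
  shows "has_bochner_integral (waiting_times n) (\<lambda>T. T i) (1 / real i)"
  using has_bochner_integral_waiting_times_prod[of "{i}" n "\<lambda>_ x. x" "\<lambda>_. 1 / real i"]
    has_bochner_integral_Exp_law_power[of i 1] assms
  by simp

lemma has_bochner_integral_waiting_times_mult:
  assumes "i \<in> {1..n}" "j \<in> {1..n}"
  shows "has_bochner_integral (waiting_times n) (\<lambda>T. T i * T j)
    (1 / (real i * real j) + (if i = j then 1 / real i ^ 2 else 0))"
proof (cases "i = j")
  case True
  then show ?thesis
    using has_bochner_integral_waiting_times_prod[of "{i}" n "\<lambda>_ x. x ^ 2" "\<lambda>_. 2 / real i ^ 2"]
      has_bochner_integral_Exp_law_power[of i 2] assms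
    by (simp add: power2_eq_square)
next
  case False
  have "has_bochner_integral (Exp_law l) (\<lambda>x. x) (1 / real l)" if "l \<in> {i, j}" for l
    using that assms has_bochner_integral_Exp_law_power[of l 1] by auto
  with False show ?thesis
    using has_bochner_integral_waiting_times_prod[of "{i, j}" n "\<lambda>_ x. x" "\<lambda>l. 1 / real l"] assms
    by auto
qed

lemma has_bochner_integral_waiting_times_sum:
  assumes "A \<subseteq> {1..n}"
  shows "has_bochner_integral (waiting_times n) (\<lambda>T. \<Sum>i\<in>A. T i) (\<Sum>i\<in>A. 1 / real i)"
    and "has_bochner_integral (waiting_times n) (\<lambda>T. (\<Sum>i\<in>A. T i)\<^sup>2)
      ((\<Sum>i\<in>A. 1 / real i)\<^sup>2 + (\<Sum>i\<in>A. 1 / real i ^ 2))"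
proof -
  have A: "finite A" "\<And>i. i \<in> A \<Longrightarrow> i \<in> {1..n}"
    using assms finite_subset by auto
  show "has_bochner_integral (waiting_times n) (\<lambda>T. \<Sum>i\<in>A. T i) (\<Sum>i\<in>A. 1 / real i)"
    using A by (intro has_bochner_integral_sum has_bochner_integral_waiting_time) auto
  have "(\<Sum>i\<in>A. T i)\<^sup>2 = (\<Sum>i\<in>A. \<Sum>j\<in>A. T i * T j)" for T :: "nat \<Rightarrow> real"
    by (simp add: power2_eq_square sum_product)
  moreover have "(\<Sum>i\<in>A. 1 / real i)\<^sup>2 + (\<Sum>i\<in>A. 1 / real i ^ 2) =
      (\<Sum>i\<in>A. \<Sum>j\<in>A. 1 / (real i * real j) + (if i = j then 1 / real i ^ 2 else 0))"
    using A(1) by (simp add: sum.distrib power2_eq_square sum_product)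
  moreover have "has_bochner_integral (waiting_times n) (\<lambda>T. \<Sum>i\<in>A. \<Sum>j\<in>A. T i * T j)
      (\<Sum>i\<in>A. \<Sum>j\<in>A. 1 / (real i * real j) + (if i = j then 1 / real i ^ 2 else 0))"
    using A by (intro has_bochner_integral_sum has_bochner_integral_waiting_times_mult) auto
  ultimately show "has_bochner_integral (waiting_times n) (\<lambda>T. (\<Sum>i\<in>A. T i)\<^sup>2)
      ((\<Sum>i\<in>A. 1 / real i)\<^sup>2 + (\<Sum>i\<in>A. 1 / real i ^ 2))"
    by simp
qed

section \<open>Moments of the coalescent time\<close>

lemma set_pmf_kappa: "n \<ge> 2 \<Longrightarrow> set_pmf (kappa_pmf n) \<subseteq> {1..<n}"
  by (auto simp: set_pmf_iff pmf_kappa split: if_splits)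

lemma yule_space_eq: "yule_space n = measure_pmf (kappa_pmf n) \<Otimes>\<^sub>M waiting_times n"
  unfolding yule_space_def waiting_times_def ..

lemma pair_prob_space_yule: "pair_prob_space (measure_pmf (kappa_pmf n)) (waiting_times n)"
  by (simp add: pair_prob_space_def pair_sigma_finite_def prob_space_waiting_times
      measure_pmf.prob_space_axioms prob_space_imp_sigma_finite)

lemma prob_space_yule_space: "prob_space (yule_space n)"
proof -
  interpret pair_prob_space "measure_pmf (kappa_pmf n)" "waiting_times n"
    by (rule pair_prob_space_yule)
  show ?thesis
    unfolding yule_space_eq by (rule prob_space_axioms)
qed

lemma integral_yule_space:
  fixes f :: "nat \<times> (nat \<Rightarrow> real) \<Rightarrow> real"
  assumes n: "n \<ge> 2" and slices: "\<And>k. integrable (waiting_times n) (\<lambda>T. f (k, T))"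
  shows "integrable (yule_space n) f"
    and "integral\<^sup>L (yule_space n) f =
      (\<Sum>k\<in>{1..<n}. pmf (kappa_pmf n) k * (\<integral>T. f (k, T) \<partial>waiting_times n))"
proof -
  let ?K = "measure_pmf (kappa_pmf n)"
  interpret P: pair_prob_space ?K "waiting_times n"
    by (rule pair_prob_space_yule)
  have "measurable (restrict_space ?K UNIV \<Otimes>\<^sub>M waiting_times n) borel =
      measurable (?K \<Otimes>\<^sub>M waiting_times n) borel"
    by (intro measurable_cong_sets sets_pair_measure_cong) simp_all
  then have meas: "f \<in> borel_measurable (?K \<Otimes>\<^sub>M waiting_times n)"
    using measurable_pair_restrict_pmf1[where A=UNIV and N="waiting_times n" and f=f and L=borel and M="kappa_pmf n"] slices
    by (simp add: borel_measurable_integrable)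
  have fin: "finite (set_pmf (kappa_pmf n))"
    using set_pmf_kappa[OF n] finite_subset by blast
  have int: "integrable (?K \<Otimes>\<^sub>M waiting_times n) f"
    by (rule P.Fubini_integrable) (use meas slices fin in \<open>auto intro: integrable_measure_pmf_finite\<close>)
  then show "integrable (yule_space n) f"
    by (simp add: yule_space_eq)
  have "integral\<^sup>L (?K \<Otimes>\<^sub>M waiting_times n) f = (\<integral>k. (\<integral>T. f (k, T) \<partial>waiting_times n) \<partial>?K)"
    using P.integral_fst'[OF int] by simp
  also have "\<dots> = (\<Sum>k\<in>{1..<n}. pmf (kappa_pmf n) k * (\<integral>T. f (k, T) \<partial>waiting_times n))"
    by (subst integral_measure_pmf_real[of "{1..<n}"]) (use set_pmf_kappa[OF n] in \<open>auto simp: mult.commute\<close>)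
  finally show "integral\<^sup>L (yule_space n) f =
      (\<Sum>k\<in>{1..<n}. pmf (kappa_pmf n) k * (\<integral>T. f (k, T) \<partial>waiting_times n))"
    by (simp add: yule_space_eq)
qed

lemma sum_inverse_powers_tail: "k \<le> n \<Longrightarrow> (\<Sum>i\<in>{Suc k..n}. 1 / real i ^ r) = H n r - H k r"
  by (induction n rule: dec_induct) (simp_all add: H_def)

lemma coal_time_moments:
  assumes n: "n \<ge> 2"
  shows "integrable (yule_space n) (coal_time n)"
    and "integral\<^sup>L (yule_space n) (coal_time n) =
      (\<Sum>k\<in>{1..<n}. pmf (kappa_pmf n) k * (H n 1 - H k 1))"
    and "integrable (yule_space n) (\<lambda>\<omega>. (coal_time n \<omega>)\<^sup>2)"
    and "(\<integral>\<omega>. (coal_time n \<omega>)\<^sup>2 \<partial>yule_space n) =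
      (\<Sum>k\<in>{1..<n}. pmf (kappa_pmf n) k * ((H n 1 - H k 1)\<^sup>2 + (H n 2 - H k 2)))"
proof -
  have tail: "{Suc k..n} \<subseteq> {1..n}" for k
    by auto
  note moments = has_bochner_integral_waiting_times_sum[OF tail, unfolded has_bochner_integral_iff]
  show "integrable (yule_space n) (coal_time n)"
    "integrable (yule_space n) (\<lambda>\<omega>. (coal_time n \<omega>)\<^sup>2)"
    using integral_yule_space(1)[OF n] moments by (auto simp: coal_time_def)
  have "integral\<^sup>L (yule_space n) (coal_time n) =
      (\<Sum>k\<in>{1..<n}. pmf (kappa_pmf n) k * (\<Sum>i\<in>{Suc k..n}. 1 / real i))"
    using integral_yule_space(2)[OF n, of "coal_time n"] moments(1) by (simp add: coal_time_def)
  then show "integral\<^sup>L (yule_space n) (coal_time n) =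
      (\<Sum>k\<in>{1..<n}. pmf (kappa_pmf n) k * (H n 1 - H k 1))"
    using sum_inverse_powers_tail[of _ n 1] by (auto intro!: sum.cong)
  have "(\<integral>\<omega>. (coal_time n \<omega>)\<^sup>2 \<partial>yule_space n) = (\<Sum>k\<in>{1..<n}. pmf (kappa_pmf n) k *
      ((\<Sum>i\<in>{Suc k..n}. 1 / real i)\<^sup>2 + (\<Sum>i\<in>{Suc k..n}. 1 / real i ^ 2)))"
    using integral_yule_space(2)[OF n, of "\<lambda>\<omega>. (coal_time n \<omega>)\<^sup>2"] moments(2)
    by (simp add: coal_time_def)
  then show "(\<integral>\<omega>. (coal_time n \<omega>)\<^sup>2 \<partial>yule_space n) =
      (\<Sum>k\<in>{1..<n}. pmf (kappa_pmf n) k * ((H n 1 - H k 1)\<^sup>2 + (H n 2 - H k 2)))"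
    using sum_inverse_powers_tail[of _ n 1] sum_inverse_powers_tail[of _ n 2] by (auto intro!: sum.cong)
qed

lemma H_Suc: "H (Suc n) r = H n r + 1 / (real n + 1) ^ r"
  by (simp add: H_def add.commute)

lemma sum_telescope_from_1:
  fixes C :: "nat \<Rightarrow> real"
  assumes "n \<ge> 1" "C 1 = 0" "\<And>k. k \<ge> 1 \<Longrightarrow> f k = C (Suc k) - C k"
  shows "(\<Sum>k\<in>{1..<n}. f k) = C n"
proof -
  have "(\<Sum>k\<in>{1..<n}. f k) = (\<Sum>k\<in>{1..<n}. C (Suc k) - C k)"
    using assms(3) by (intro sum.cong) auto
  also have "\<dots> = C n"
    using assms(1,2) by (simp add: sum_Suc_diff')
  finally show ?thesis .
qed

lemma sum_weights:
  assumes "n \<ge> 1"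
  shows "(\<Sum>k\<in>{1..<n}. 1 / ((real k + 1) * (real k + 2))) = (real n - 1) / (2 * (real n + 1))"
proof (rule sum_telescope_from_1[OF assms])
  fix k
  have "real k + 1 > 0" "real k + 2 > 0"
    by linarith+
  then show "1 / ((real k + 1) * (real k + 2)) =
      (real (Suc k) - 1) / (2 * (real (Suc k) + 1)) - (real k - 1) / (2 * (real k + 1))"
    by (simp add: divide_simps) (simp add: algebra_simps)
qed simp

lemma sum_weights_H1:
  assumes "n \<ge> 1"
  shows "(\<Sum>k\<in>{1..<n}. H k 1 / ((real k + 1) * (real k + 2))) = (real n - H n 1) / (real n + 1)"
proof (rule sum_telescope_from_1[OF assms])
  fix k
  have "real k + 1 > 0" "real k + 2 > 0"
    by linarith+
  then show "H k 1 / ((real k + 1) * (real k + 2)) =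
      (real (Suc k) - H (Suc k) 1) / (real (Suc k) + 1) - (real k - H k 1) / (real k + 1)"
    by (simp add: H_Suc divide_simps) (simp add: algebra_simps)
qed (simp add: H_def)

lemma sum_weights_H2:
  assumes "n \<ge> 1"
  shows "(\<Sum>k\<in>{1..<n}. H k 2 / ((real k + 1) * (real k + 2))) = real n * (H n 2 - 1) / (real n + 1)"
proof (rule sum_telescope_from_1[OF assms])
  fix k
  have "real k + 1 > 0" "real k + 2 > 0"
    by linarith+
  then show "H k 2 / ((real k + 1) * (real k + 2)) =
      real (Suc k) * (H (Suc k) 2 - 1) / (real (Suc k) + 1) - real k * (H k 2 - 1) / (real k + 1)"
    by (simp add: H_Suc divide_simps) (simp add: algebra_simps power2_eq_square)
qed (simp add: H_def)

lemma sum_weights_H1_squared: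
  assumes "n \<ge> 1"
  shows "(\<Sum>k\<in>{1..<n}. (H k 1)\<^sup>2 / ((real k + 1) * (real k + 2))) =
    1 + H n 2 - (1 + 2 * H n 1) / real n + 1 / (real n)\<^sup>2 - (H n 1 - 1 / real n)\<^sup>2 / (real n + 1)"
proof (rule sum_telescope_from_1[OF assms])
  fix k :: nat assume "k \<ge> 1"
  then have "real k > 0" "real k + 1 > 0" "real k + 2 > 0"
    by auto
  then show "(H k 1)\<^sup>2 / ((real k + 1) * (real k + 2)) =
      (1 + H (Suc k) 2 - (1 + 2 * H (Suc k) 1) / real (Suc k) + 1 / (real (Suc k))\<^sup>2
        - (H (Suc k) 1 - 1 / real (Suc k))\<^sup>2 / (real (Suc k) + 1))
      - (1 + H k 2 - (1 + 2 * H k 1) / real k + 1 / (real k)\<^sup>2 - (H k 1 - 1 / real k)\<^sup>2 / (real k + 1))"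
    by (simp add: H_Suc divide_simps) (simp add: algebra_simps power2_eq_square)
qed (simp add: H_def)

lemma expectation_coal_time:
  assumes n: "n \<ge> 2"
  shows "integral\<^sup>L (yule_space n) (coal_time n) = ((real n + 1) * H n 1 - 2 * real n) / (real n - 1)"
proof -
  define c where "c = 2 * (real n + 1) / (real n - 1)"
  define w where "w k = 1 / ((real k + 1) * (real k + 2))" for k :: nat
  have pmf: "pmf (kappa_pmf n) k = c * w k" if "k \<in> {1..<n}" for k
    using that n by (simp add: pmf_kappa c_def w_def)
  have "integral\<^sup>L (yule_space n) (coal_time n) = (\<Sum>k\<in>{1..<n}. c * (H n 1 * w k - H k 1 * w k))"
    unfolding coal_time_moments(2)[OF n] by (intro sum.cong refl) (simp add: pmf algebra_simps)
  also have "\<dots> = c * (H n 1 * (\<Sum>k\<in>{1..<n}. w k) - (\<Sum>k\<in>{1..<n}. H k 1 * w k))"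
    by (simp only: sum_subtractf flip: sum_distrib_left)
  also have "\<dots> = c * (H n 1 * ((real n - 1) / (2 * (real n + 1))) - (real n - H n 1) / (real n + 1))"
    using n sum_weights sum_weights_H1 by (simp add: w_def)
  also have "\<dots> = ((real n + 1) * H n 1 - 2 * real n) / (real n - 1)"
    using n unfolding c_def by (simp add: divide_simps) (simp add: algebra_simps)
  finally show ?thesis .
qed

lemma second_moment_coal_time:
  assumes n: "n \<ge> 2"
  shows "(\<integral>\<omega>. (coal_time n \<omega>)\<^sup>2 \<partial>yule_space n) =
    ((real n + 1) * ((H n 1)\<^sup>2 + H n 2 - 4 * H n 1) + 4 * real n) / (real n - 1)"
proof -
  define c where "c = 2 * (real n + 1) / (real n - 1)"
  define w where "w k = 1 / ((real k + 1) * (real k + 2))" for k :: nat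
  define h g where "h = H n 1" and "g = H n 2"
  have pmf: "pmf (kappa_pmf n) k = c * w k" if "k \<in> {1..<n}" for k
    using that n by (simp add: pmf_kappa c_def w_def)
  have "(\<integral>\<omega>. (coal_time n \<omega>)\<^sup>2 \<partial>yule_space n) = (\<Sum>k\<in>{1..<n}. c * ((h\<^sup>2 + g) * w k
      - 2 * h * (H k 1 * w k) + (H k 1)\<^sup>2 * w k - H k 2 * w k))"
    unfolding coal_time_moments(4)[OF n] h_def g_def
    by (intro sum.cong refl) (simp add: pmf algebra_simps power2_eq_square)
  also have "\<dots> = c * ((h\<^sup>2 + g) * (\<Sum>k\<in>{1..<n}. w k) - 2 * h * (\<Sum>k\<in>{1..<n}. H k 1 * w k)
      + (\<Sum>k\<in>{1..<n}. (H k 1)\<^sup>2 * w k) - (\<Sum>k\<in>{1..<n}. H k 2 * w k))"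
    by (simp only: sum_subtractf sum.distrib flip: sum_distrib_left)
  also have "\<dots> = c * ((h\<^sup>2 + g) * ((real n - 1) / (2 * (real n + 1))) - 2 * h * ((real n - h) / (real n + 1))
      + (1 + g - (1 + 2 * h) / real n + 1 / (real n)\<^sup>2 - (h - 1 / real n)\<^sup>2 / (real n + 1))
      - real n * (g - 1) / (real n + 1))"
    using n sum_weights sum_weights_H1 sum_weights_H2 sum_weights_H1_squared
    by (simp add: w_def h_def g_def)
  also have "\<dots> = ((real n + 1) * (h\<^sup>2 + g - 4 * h) + 4 * real n) / (real n - 1)"
    using n unfolding c_def by (simp add: divide_simps) (simp add: algebra_simps power2_eq_square)
  finally show ?thesis
    by (simp add: h_def g_def)
qed

lemma variance_coal_time:
  assumes n: "n \<ge> 2"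
  shows "prob_space.variance (yule_space n) (coal_time n) =
    (real n + 1) / (real n - 1) * H n 2
    - 2 * (real n + 1) / (real n - 1)^2 * (H n 1)^2
    + 4 * (real n + 1) / (real n - 1)^2 * H n 1
    - 4 / (real n - 1) - 4 / (real n - 1)^2"
proof -
  interpret prob_space "yule_space n"
    by (rule prob_space_yule_space)
  have "variance (coal_time n) =
      (\<integral>\<omega>. (coal_time n \<omega>)\<^sup>2 \<partial>yule_space n) - (integral\<^sup>L (yule_space n) (coal_time n))\<^sup>2"
    using coal_time_moments(1,3)[OF n] by (rule variance_eq)
  also have "\<dots> = ((real n + 1) * ((H n 1)\<^sup>2 + H n 2 - 4 * H n 1) + 4 * real n) / (real n - 1)
      - (((real n + 1) * H n 1 - 2 * real n) / (real n - 1))\<^sup>2"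
    using n by (simp add: expectation_coal_time second_moment_coal_time)
  also have "\<dots> = (real n + 1) / (real n - 1) * H n 2
      - 2 * (real n + 1) / (real n - 1)^2 * (H n 1)^2
      + 4 * (real n + 1) / (real n - 1)^2 * H n 1
      - 4 / (real n - 1) - 4 / (real n - 1)^2"
    using n by (simp add: divide_simps) (simp add: algebra_simps power2_eq_square)
  finally show ?thesis .
qed

section \<open>Asymptotics\<close>

lemma H_eq_harm: "H n 1 = harm n"
  by (simp add: H_def harm_def divide_inverse)

lemma tendsto_H2: "(\<lambda>n. H n 2) \<longlonglongrightarrow> pi\<^sup>2 / 6"
proof -
  have "H n 2 = (\<Sum>i<n. 1 / (1 + real i)\<^sup>2)" for n
    by (induction n) (simp_all add: H_Suc H_def add.commute)
  with inverse_squares_sums show ?thesis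
    by (simp add: sums_def)
qed

lemma H_nonneg: "H n r \<ge> 0"
  by (simp add: H_def sum_nonneg)

lemma H1_le_1_plus_ln: "n \<ge> 1 \<Longrightarrow> H n 1 \<le> 1 + ln (real n)"
  using euler_mascheroni_sequence_decreasing[of 1 n] unfolding H_eq_harm by (simp add: harm_def)

lemma tendsto_zero_mult_H1_power:
  assumes "eventually (\<lambda>n. a n \<ge> 0) sequentially" "(\<lambda>n. a n * (1 + ln (real n)) ^ p) \<longlonglongrightarrow> 0"
  shows "(\<lambda>n. a n * H n 1 ^ p) \<longlonglongrightarrow> 0"
proof (rule tendsto_sandwich[OF _ _ tendsto_const assms(2)])
  show "eventually (\<lambda>n. 0 \<le> a n * H n 1 ^ p) sequentially"
    using assms(1) by eventually_elim (simp add: H_nonneg)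
  show "eventually (\<lambda>n. a n * H n 1 ^ p \<le> a n * (1 + ln (real n)) ^ p) sequentially"
    using assms(1) eventually_ge_at_top[of 1]
  proof eventually_elim
    case (elim n)
    then show ?case
      using H1_le_1_plus_ln[of n] H_nonneg[of n 1] by (intro mult_left_mono power_mono) simp_all
  qed
qed

lemma tendsto_variance_formula:
  "(\<lambda>n. (real n + 1) / (real n - 1) * H n 2
      - 2 * (real n + 1) / (real n - 1)^2 * (H n 1)^2
      + 4 * (real n + 1) / (real n - 1)^2 * H n 1
      - 4 / (real n - 1) - 4 / (real n - 1)^2) \<longlonglongrightarrow> pi^2 / 6"
proof -
  have pos: "eventually (\<lambda>n. c * (real n + 1) / (real n - 1)^2 \<ge> 0) sequentially" if "c \<ge> 0" for c :: real
    using that by (intro always_eventually) simp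
  have "(\<lambda>n. 2 * (real n + 1) / (real n - 1)^2 * (H n 1)^2) \<longlonglongrightarrow> 0"
    by (rule tendsto_zero_mult_H1_power[OF pos]) (simp, real_asymp)
  moreover have "(\<lambda>n. 4 * (real n + 1) / (real n - 1)^2 * H n 1 ^ 1) \<longlonglongrightarrow> 0"
    by (rule tendsto_zero_mult_H1_power[OF pos]) (simp, real_asymp)
  moreover have "(\<lambda>n. (real n + 1) / (real n - 1)) \<longlonglongrightarrow> 1"
    "(\<lambda>n. 4 / (real n - 1)) \<longlonglongrightarrow> 0" "(\<lambda>n. 4 / (real n - 1)^2) \<longlonglongrightarrow> 0"
    by real_asymp+
  ultimately have "(\<lambda>n. (real n + 1) / (real n - 1) * H n 2
      - 2 * (real n + 1) / (real n - 1)^2 * (H n 1)^2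
      + 4 * (real n + 1) / (real n - 1)^2 * H n 1
      - 4 / (real n - 1) - 4 / (real n - 1)^2) \<longlonglongrightarrow> 1 * (pi^2 / 6) - 0 + 0 - 0 - 0"
    by (intro tendsto_intros tendsto_H2) simp_all
  then show ?thesis
    by simp
qed

theorem lemmaY4p8:
  shows "(\<forall>n::nat. n \<ge> 2 \<longrightarrow>
            prob_space.variance (yule_space n) (coal_time n) =
              (real n + 1) / (real n - 1) * H n 2
              - 2 * (real n + 1) / (real n - 1)^2 * (H n 1)^2
              + 4 * (real n + 1) / (real n - 1)^2 * H n 1
              - 4 / (real n - 1) - 4 / (real n - 1)^2)
       \<and> ((\<lambda>n. (real n + 1) / (real n - 1) * H n 2
              - 2 * (real n + 1) / (real n - 1)^2 * (H n 1)^2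
              + 4 * (real n + 1) / (real n - 1)^2 * H n 1
              - 4 / (real n - 1) - 4 / (real n - 1)^2) \<longlonglongrightarrow> pi^2 / 6)"
  using variance_coal_time tendsto_variance_formula by blast

end
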